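(* Let $\sigma\colon O\to O'$ be an isomorphism of finite $Act$-labelled posets and let $O\rhd c_1$, $O\rhd c_2$ be P-markings. If $O\rhd c_1\sim_C O\rhd c_2$ then $O'\rhd c_1\sigma\sim_C O'\rhd c_2\sigma$.
   Context: Fix a set $Act$ of action labels, an infinite set $\mathcal{E}$ of event names and a net $N=(S,T,F,l)$ (disjoint places $S$ and transitions $T$, $F\subseteq(S\times T)\cup(T\times S)$, $l\colon T\to Act$, ${}^\bullet t=\{s:(s,t)\in F\}$, $t^\bullet=\{s:(t,s)\in F\}$ nonempty). Posets are finite $Act$-labelled posets $O=(X_O,\preccurlyeq_O,l_O)$, $X_O\subseteq\mathcal{E}$; $|O|=\{(x,l_O(x))\}$, $x_a=(x,a)$. Morphisms preserve order and labels ($\sigma(x_a)=\sigma(x)_a$); isomorphisms are bijective morphisms with morphism inverse. $\max_O K$: maximal elements of $K\subseteq|O|$; $K$ down-closed if $y\in K$, $x\preccurlyeq_O y$ imply $x\in K$. Causal markings: finite sets $c$ of pairs $K\vdash s$ ($s\in S$, $K$ finite $\subseteq\mathcal{E}\times Act$); $\mathcal{K}(c)$ union of cause sets, $|c|$ set of places, $K\vdash m=\{K\vdash s:s\in m\}$, $c\sigma=\{\sigma(K)\vdash s\}$. P-marking $O\rhd c$: cause sets are down-closed subsets of $|O|$. $\delta(O,K,e_a)$: $O$ plus event $e\notin X_O$ labelled $a$ above all of $K$, reflexive-transitively closed. Concrete causal case graph: $O\rhd c\cup c'\xrightarrow{K\vdash e_a}\delta(O,K,e_a)\rhd(\mathcal{K}(c)\cup\{e_a\}\vdash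 t^\bullet)\cup c'$ whenever $t\in T$, $O\rhd c\cup c'$ a P-marking, $|c|={}^\bullet t$, $a=l(t)$, $e\in\mathcal{E}\setminus X_O$, $K=\max_O\mathcal{K}(c)$. A concrete causal bisimulation is a family $\{R_O\}$ indexed by posets of relations on P-markings with: $(O_1\rhd c_1,O_2\rhd c_2)\in R_O$ implies $O_1=O_2=O$; if $(O\rhd c_1,O\rhd c_2)\in R_O$ and $O\rhd c_1\xrightarrow{K\vdash e_a}O'\rhd c_1'$ then $O\rhd c_2\xrightarrow{K\vdash e_a}O'\rhd c_2'$ with $(O'\rhd c_1',O'\rhd c_2')\in R_{O'}$, and vice versa. $\sim_C$ is the greatest one. *)

theory Defs
  imports Main
begin

text \<open>A net N = (S,T,F,l). The flow relation F is split into its two parts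
  F \<inter> (S \<times> T) and F \<inter> (T \<times> S), since places and transitions live in different types.\<close>

record ('s, 't, 'a) net =
  places :: "'s set"
  transs :: "'t set"
  flow_st :: "('s \<times> 't) set"
  flow_ts :: "('t \<times> 's) set"
  tlab   :: "'t \<Rightarrow> 'a"

definition preset :: "('s, 't, 'a) net \<Rightarrow> 't \<Rightarrow> 's set" where
  "preset N t = {s. (s, t) \<in> flow_st N}"

definition postset :: "('s, 't, 'a) net \<Rightarrow> 't \<Rightarrow> 's set" where
  "postset N t = {s. (t, s) \<in> flow_ts N}"

definition wf_net :: "('s, 't, 'a) net \<Rightarrow> bool" where
  "wf_net N \<longleftrightarrow> flow_st N \<subseteq> places N \<times> transs N \<and> flow_ts N \<subseteq> transs N \<times> places N
     \<and> (\<forall>t \<in> transs N. postset N t \<noteq> {})"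

text \<open>A poset P = (X_O, \<preccurlyeq>_O, l_O): the labelling is a partial map whose domain is X_O,
  the order is a relation on X_O.\<close>

record ('e, 'a) poset =
  ord :: "('e \<times> 'e) set"
  lab :: "'e \<rightharpoonup> 'a"

definition carrier :: "('e, 'a) poset \<Rightarrow> 'e set" where
  "carrier P = dom (lab P)"

definition wf_poset :: "('e, 'a) poset \<Rightarrow> bool" where
  "wf_poset P \<longleftrightarrow> finite (carrier P) \<and> ord P \<subseteq> carrier P \<times> carrier P
     \<and> (\<forall>x \<in> carrier P. (x, x) \<in> ord P)
     \<and> trans (ord P) \<and> antisym (ord P)"

definition elems :: "('e, 'a) poset \<Rightarrow> ('e \<times> 'a) set" where
  "elems P = {(x, a). lab P x = Some a}"

definition morph :: "('e, 'a) poset \<Rightarrow> ('e, 'a) poset \<Rightarrow> ('e \<Rightarrow> 'e) \<Rightarrow> bool" where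
  "morph P Q \<sigma> \<longleftrightarrow> (\<forall>x \<in> carrier P. \<sigma> x \<in> carrier Q \<and> lab Q (\<sigma> x) = lab P x)
     \<and> (\<forall>x y. (x, y) \<in> ord P \<longrightarrow> (\<sigma> x, \<sigma> y) \<in> ord Q)"

definition iso :: "('e, 'a) poset \<Rightarrow> ('e, 'a) poset \<Rightarrow> ('e \<Rightarrow> 'e) \<Rightarrow> bool" where
  "iso P Q \<sigma> \<longleftrightarrow> morph P Q \<sigma> \<and> bij_betw \<sigma> (carrier P) (carrier Q)
     \<and> morph Q P (inv_into (carrier P) \<sigma>)"

definition down_closed :: "('e, 'a) poset \<Rightarrow> ('e \<times> 'a) set \<Rightarrow> bool" where
  "down_closed P K \<longleftrightarrow> K \<subseteq> elems P
     \<and> (\<forall>y \<in> K. \<forall>x \<in> elems P. (fst x, fst y) \<in> ord P \<longrightarrow> x \<in> K)"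

definition maxO :: "('e, 'a) poset \<Rightarrow> ('e \<times> 'a) set \<Rightarrow> ('e \<times> 'a) set" where
  "maxO P K = {y \<in> K. \<not> (\<exists>z \<in> K. (fst y, fst z) \<in> ord P \<and> fst y \<noteq> fst z)}"

definition delta :: "('e, 'a) poset \<Rightarrow> ('e \<times> 'a) set \<Rightarrow> 'e \<Rightarrow> 'a \<Rightarrow> ('e, 'a) poset" where
  "delta P K e a =
     \<lparr> ord = Id_on (carrier P \<union> {e}) \<union> (ord P \<union> {(fst k, e) | k. k \<in> K})\<^sup>+,
       lab = (lab P)(e \<mapsto> a) \<rparr>"

type_synonym ('e, 'a, 's) cmarking = "(('e \<times> 'a) set \<times> 's) set"

definition causes :: "('e, 'a, 's) cmarking \<Rightarrow> ('e \<times> 'a) set" where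
  "causes c = \<Union> (fst ` c)"

definition places_of :: "('e, 'a, 's) cmarking \<Rightarrow> 's set" where
  "places_of c = snd ` c"

definition is_cmarking :: "('e, 'a, 's) cmarking \<Rightarrow> bool" where
  "is_cmarking c \<longleftrightarrow> finite c \<and> (\<forall>(K, s) \<in> c. finite K)"

definition cause_all :: "('e \<times> 'a) set \<Rightarrow> 's set \<Rightarrow> ('e, 'a, 's) cmarking" where
  "cause_all K m = {(K, s) | s. s \<in> m}"

definition rename_set :: "('e \<Rightarrow> 'e) \<Rightarrow> ('e \<times> 'a) set \<Rightarrow> ('e \<times> 'a) set" where
  "rename_set \<sigma> K = {(\<sigma> x, a) | x a. (x, a) \<in> K}"

definition rename :: "('e, 'a, 's) cmarking \<Rightarrow> ('e \<Rightarrow> 'e) \<Rightarrow> ('e, 'a, 's) cmarking" where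
  "rename c \<sigma> = {(rename_set \<sigma> K, s) | K s. (K, s) \<in> c}"

definition pmarking :: "('s, 't, 'a) net \<Rightarrow> ('e, 'a) poset \<Rightarrow> ('e, 'a, 's) cmarking \<Rightarrow> bool" where
  "pmarking N P c \<longleftrightarrow> wf_poset P \<and> is_cmarking c \<and> places_of c \<subseteq> places N
     \<and> (\<forall>(K, s) \<in> c. down_closed P K)"

definition cstep :: "('s, 't, 'a) net \<Rightarrow> ('e, 'a) poset \<Rightarrow> ('e, 'a, 's) cmarking
    \<Rightarrow> ('e \<times> 'a) set \<Rightarrow> 'e \<Rightarrow> 'a \<Rightarrow> ('e, 'a) poset \<Rightarrow> ('e, 'a, 's) cmarking \<Rightarrow> bool" where
  "cstep N P c K e a Q c'' \<longleftrightarrow>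
     (\<exists>t c0 c'. t \<in> transs N \<and> c = c0 \<union> c' \<and> pmarking N P (c0 \<union> c')
        \<and> places_of c0 = preset N t \<and> a = tlab N t \<and> e \<notin> carrier P
        \<and> K = maxO P (causes c0) \<and> Q = delta P K e a
        \<and> c'' = cause_all (causes c0 \<union> {(e, a)}) (postset N t) \<union> c')"

definition ccbisim :: "('s, 't, 'a) net
    \<Rightarrow> (('e, 'a) poset \<Rightarrow> (('e, 'a, 's) cmarking \<times> ('e, 'a, 's) cmarking) set) \<Rightarrow> bool" where
  "ccbisim N R \<longleftrightarrow>
     (\<forall>P c1 c2. (c1, c2) \<in> R P \<longrightarrow> pmarking N P c1 \<and> pmarking N P c2)
   \<and> (\<forall>P c1 c2 K e a Q c1'. (c1, c2) \<in> R P \<and> cstep N P c1 K e a Q c1' \<longrightarrow>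
        (\<exists>c2'. cstep N P c2 K e a Q c2' \<and> (c1', c2') \<in> R Q))
   \<and> (\<forall>P c1 c2 K e a Q c2'. (c1, c2) \<in> R P \<and> cstep N P c2 K e a Q c2' \<longrightarrow>
        (\<exists>c1'. cstep N P c1 K e a Q c1' \<and> (c1', c2') \<in> R Q))"

definition ccbisimilar :: "('s, 't, 'a) net \<Rightarrow> ('e, 'a) poset
    \<Rightarrow> ('e, 'a, 's) cmarking \<Rightarrow> ('e, 'a, 's) cmarking \<Rightarrow> bool" where
  "ccbisimilar N P c1 c2 \<longleftrightarrow> (\<exists>R. ccbisim N R \<and> (c1, c2) \<in> R P)"

end

theory Submission
  imports Defs
begin

text \<open>Call a pair of markings over Q related when it is the image of a bisimilar pair over some
  P under an isomorphism \<open>\<rho> : P \<cong> Q\<close>. This relation is a concrete causal bisimulation: a step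
  of \<open>c\<^sub>1\<rho>\<close> is pulled back along \<open>\<rho>\<^sup>-\<^sup>1\<close> to a step of \<open>c\<^sub>1\<close> whose new event is
  renamed to one not occurring in P, matched there by a step of \<open>c\<^sub>2\<close>, and the matching step is
  pushed forward along \<open>\<rho>\<close> extended by the inverse renaming of the new event. This works because
  everything a step depends on -- down-closed cause sets, maximal causes and the extension
  \<open>\<delta>(O, K, e\<^sub>a)\<close> -- commutes with isomorphisms, and the extended map is again an isomorphism
  between the extended posets.\<close>

section \<open>Renaming causal markings\<close>

lemma rename_set_eq_image: "rename_set f K = apfst f ` K"
  unfolding rename_set_def by force

lemma rename_eq_image: "rename c f = apfst (rename_set f) ` c"
  unfolding rename_def by force

lemma rename_set_cong:
  "(\<And>x b. (x, b) \<in> K \<Longrightarrow> f x = g x) \<Longrightarrow> rename_set f K = rename_set g K"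
  unfolding rename_set_eq_image by (rule image_cong) auto

lemma rename_set_inverse:
  assumes "\<And>x b. (x, b) \<in> K \<Longrightarrow> g (f x) = x"
  shows "rename_set g (rename_set f K) = K"
proof -
  have "apfst g ` apfst f ` K = id ` K"
    unfolding image_comp by (rule image_cong) (auto simp: assms)
  then show ?thesis unfolding rename_set_eq_image by simp
qed

lemma causes_rename: "causes (rename c f) = rename_set f (causes c)"
  unfolding causes_def rename_eq_image rename_set_eq_image by auto

lemma rename_cong:
  "(\<And>x b. (x, b) \<in> causes c \<Longrightarrow> f x = g x) \<Longrightarrow> rename c f = rename c g"
  unfolding rename_eq_image causes_def
  by (rule image_cong) (auto intro!: rename_set_cong)

lemma rename_inverse:
  assumes "\<And>x b. (x, b) \<in> causes c \<Longrightarrow> g (f x) = x"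
  shows "rename (rename c f) g = c"
proof -
  have "apfst (rename_set g) ` apfst (rename_set f) ` c = id ` c"
    unfolding image_comp
  proof (rule image_cong)
    fix p assume "p \<in> c"
    then have "rename_set g (rename_set f (fst p)) = fst p"
      by (intro rename_set_inverse assms) (auto simp: causes_def)
    then show "(apfst (rename_set g) \<circ> apfst (rename_set f)) p = id p" by (cases p) simp
  qed simp
  then show ?thesis unfolding rename_eq_image by simp
qed

lemma rename_Un: "rename (c \<union> d) f = rename c f \<union> rename d f"
  unfolding rename_eq_image by (rule image_Un)

lemma places_of_rename: "places_of (rename c f) = places_of c"
  unfolding places_of_def rename_eq_image by force

lemma is_cmarking_rename: "is_cmarking c \<Longrightarrow> is_cmarking (rename c f)"
  unfolding is_cmarking_def rename_eq_image rename_set_eq_image by force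

lemma rename_cause_all: "rename (cause_all K m) f = cause_all (rename_set f K) m"
  unfolding rename_def cause_all_def by auto

lemma causes_cause_all: "causes (cause_all K m) \<subseteq> K"
  unfolding causes_def cause_all_def by auto

lemma causes_Un: "causes (c \<union> d) = causes c \<union> causes d"
  unfolding causes_def by auto

section \<open>Isomorphisms of labelled posets\<close>

definition poset_iso :: "('e, 'a) poset \<Rightarrow> ('e, 'a) poset \<Rightarrow> ('e \<Rightarrow> 'e) \<Rightarrow> bool" where
  "poset_iso P Q \<sigma> \<longleftrightarrow> bij_betw \<sigma> (carrier P) (carrier Q)
     \<and> (\<forall>x \<in> carrier P. lab Q (\<sigma> x) = lab P x)
     \<and> (\<forall>x \<in> carrier P. \<forall>y \<in> carrier P. (\<sigma> x, \<sigma> y) \<in> ord Q \<longleftrightarrow> (x, y) \<in> ord P)"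

lemma iso_imp_poset_iso:
  assumes "iso P Q \<sigma>"
  shows "poset_iso P Q \<sigma>"
proof -
  have bij: "bij_betw \<sigma> (carrier P) (carrier Q)" and mor: "morph P Q \<sigma>"
    and inv: "morph Q P (inv_into (carrier P) \<sigma>)"
    using assms unfolding iso_def by auto
  have "(x, y) \<in> ord P" if "x \<in> carrier P" "y \<in> carrier P" "(\<sigma> x, \<sigma> y) \<in> ord Q" for x y
    using inv that bij_betw_inv_into_left[OF bij] unfolding morph_def by metis
  with bij mor show ?thesis unfolding poset_iso_def morph_def by blast
qed

lemma poset_iso_inv:
  assumes "poset_iso P Q \<sigma>"
  shows "poset_iso Q P (inv_into (carrier P) \<sigma>)"
proof -
  have bij: "bij_betw \<sigma> (carrier P) (carrier Q)" using assms unfolding poset_iso_def by blast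
  have "inv_into (carrier P) \<sigma> y \<in> carrier P" "\<sigma> (inv_into (carrier P) \<sigma> y) = y"
    if "y \<in> carrier Q" for y
    using that bij_betw_inv_into_right[OF bij] bij_betw_apply[OF bij_betw_inv_into[OF bij]] by auto
  with assms bij_betw_inv_into[OF bij] show ?thesis unfolding poset_iso_def by metis
qed

lemma poset_iso_carrier: "poset_iso P Q \<sigma> \<Longrightarrow> x \<in> carrier P \<Longrightarrow> \<sigma> x \<in> carrier Q"
  unfolding poset_iso_def bij_betw_def by blast

lemma poset_iso_lab: "poset_iso P Q \<sigma> \<Longrightarrow> x \<in> carrier P \<Longrightarrow> lab Q (\<sigma> x) = lab P x"
  unfolding poset_iso_def by blast

lemma poset_iso_ord:
  "poset_iso P Q \<sigma> \<Longrightarrow> x \<in> carrier P \<Longrightarrow> y \<in> carrier P \<Longrightarrow> (\<sigma> x, \<sigma> y) \<in> ord Q \<longleftrightarrow> (x, y) \<in> ord P"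
  unfolding poset_iso_def by blast

lemma poset_iso_eq_iff:
  "poset_iso P Q \<sigma> \<Longrightarrow> x \<in> carrier P \<Longrightarrow> y \<in> carrier P \<Longrightarrow> \<sigma> x = \<sigma> y \<longleftrightarrow> x = y"
  unfolding poset_iso_def bij_betw_def inj_on_def by blast

lemma poset_iso_surj: "poset_iso P Q \<sigma> \<Longrightarrow> y \<in> carrier Q \<Longrightarrow> \<exists>x \<in> carrier P. y = \<sigma> x"
  unfolding poset_iso_def bij_betw_def by blast

lemma poset_iso_inv_into_left:
  "poset_iso P Q \<sigma> \<Longrightarrow> x \<in> carrier P \<Longrightarrow> inv_into (carrier P) \<sigma> (\<sigma> x) = x"
  unfolding poset_iso_def by (blast intro: bij_betw_inv_into_left)

lemma poset_iso_inv_into_right: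
  "poset_iso P Q \<sigma> \<Longrightarrow> y \<in> carrier Q \<Longrightarrow> \<sigma> (inv_into (carrier P) \<sigma> y) = y"
  unfolding poset_iso_def by (blast intro: bij_betw_inv_into_right)

lemma elems_carrier: "(x, b) \<in> elems P \<Longrightarrow> x \<in> carrier P"
  unfolding elems_def carrier_def by auto

lemma poset_iso_elems:
  "poset_iso P Q \<sigma> \<Longrightarrow> x \<in> carrier P \<Longrightarrow> (\<sigma> x, b) \<in> elems Q \<longleftrightarrow> (x, b) \<in> elems P"
  unfolding elems_def by (simp add: poset_iso_lab)

lemma rename_set_elems: "poset_iso P Q \<sigma> \<Longrightarrow> K \<subseteq> elems P \<Longrightarrow> rename_set \<sigma> K \<subseteq> elems Q"
  unfolding rename_set_def by (blast dest: elems_carrier poset_iso_elems)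

section \<open>Invariance of P-markings and maximal causes\<close>

lemma down_closed_rename:
  assumes iso: "poset_iso P Q \<sigma>" and dc: "down_closed P K"
  shows "down_closed Q (rename_set \<sigma> K)"
  unfolding down_closed_def
proof (intro conjI ballI impI)
  have K: "K \<subseteq> elems P" using dc unfolding down_closed_def by blast
  then show "rename_set \<sigma> K \<subseteq> elems Q" using iso by (rule rename_set_elems[rotated])
  fix y z assume y: "y \<in> rename_set \<sigma> K" and z: "z \<in> elems Q" and zy: "(fst z, fst y) \<in> ord Q"
  obtain x b where x: "(x, b) \<in> K" and y_eq: "y = (\<sigma> x, b)"
    using y unfolding rename_set_def by blast
  obtain w b' where z_eq: "z = (w, b')" by (cases z)
  have "w \<in> carrier Q" using elems_carrier[of w b' Q] z z_eq by simp
  then obtain v where v: "v \<in> carrier P" and w: "w = \<sigma> v" using poset_iso_surj[OF iso] by blast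
  have xP: "x \<in> carrier P" using elems_carrier[of x b P] x K by blast
  have "(v, b') \<in> elems P" using z z_eq w poset_iso_elems[OF iso v] by simp
  moreover have "(v, x) \<in> ord P" using zy z_eq y_eq w poset_iso_ord[OF iso v xP] by simp
  ultimately have "(v, b') \<in> K" using dc x unfolding down_closed_def by (metis fst_conv)
  then show "z \<in> rename_set \<sigma> K" using z_eq w unfolding rename_set_def by blast
qed

lemma pmarking_causes: "pmarking N P c \<Longrightarrow> causes c \<subseteq> elems P"
  unfolding pmarking_def causes_def down_closed_def by fastforce

lemma rename_inv_into_left:
  assumes iso: "poset_iso P Q \<sigma>" and c: "causes c \<subseteq> elems P"
  shows "rename (rename c \<sigma>) (inv_into (carrier P) \<sigma>) = c"
proof (rule rename_inverse)
  fix x b assume "(x, b) \<in> causes c"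
  then have "x \<in> carrier P" using c elems_carrier[of x b P] by blast
  then show "inv_into (carrier P) \<sigma> (\<sigma> x) = x" by (rule poset_iso_inv_into_left[OF iso])
qed

lemma rename_set_inv_into_right:
  assumes iso: "poset_iso P Q \<sigma>" and K: "K \<subseteq> elems Q"
  shows "rename_set \<sigma> (rename_set (inv_into (carrier P) \<sigma>) K) = K"
proof (rule rename_set_inverse)
  fix x b assume "(x, b) \<in> K"
  then have "x \<in> carrier Q" using K elems_carrier[of x b Q] by blast
  then show "\<sigma> (inv_into (carrier P) \<sigma> x) = x" by (rule poset_iso_inv_into_right[OF iso])
qed

lemma pmarking_rename:
  assumes iso: "poset_iso P Q \<sigma>" and "wf_poset Q" and pm: "pmarking N P c"
  shows "pmarking N Q (rename c \<sigma>)"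
proof -
  have "down_closed Q K" if "(K, s) \<in> rename c \<sigma>" for K s
    using that pm down_closed_rename[OF iso] unfolding rename_def pmarking_def by fast
  with assms show ?thesis
    unfolding pmarking_def by (auto simp: places_of_rename is_cmarking_rename)
qed

lemma maxO_rename:
  assumes iso: "poset_iso P Q \<sigma>" and X: "X \<subseteq> elems P"
  shows "maxO Q (rename_set \<sigma> X) = rename_set \<sigma> (maxO P X)"
proof -
  have carrier: "fst y \<in> carrier P" if "y \<in> X" for y
    using that X elems_carrier[of "fst y" "snd y" P] by auto
  have strict: "(\<sigma> (fst y), \<sigma> (fst z)) \<in> ord Q \<and> \<sigma> (fst y) \<noteq> \<sigma> (fst z)
      \<longleftrightarrow> (fst y, fst z) \<in> ord P \<and> fst y \<noteq> fst z"
    if "y \<in> X" "z \<in> X" for y z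
    using carrier[OF that(1)] carrier[OF that(2)] poset_iso_ord[OF iso] poset_iso_eq_iff[OF iso] by blast
  have "maxO Q (apfst \<sigma> ` X) = apfst \<sigma> ` {y \<in> X. \<not> (\<exists>z \<in> X.
      (fst (apfst \<sigma> y), fst (apfst \<sigma> z)) \<in> ord Q \<and> fst (apfst \<sigma> y) \<noteq> fst (apfst \<sigma> z))}"
    unfolding maxO_def by blast
  also have "\<dots> = apfst \<sigma> ` maxO P X"
    unfolding maxO_def fst_apfst using strict by (metis (no_types, lifting))
  finally show ?thesis unfolding rename_set_eq_image .
qed

lemma below_rename_set:
  assumes iso: "poset_iso P Q \<sigma>" and K: "K \<subseteq> elems P" and x: "x \<in> carrier P"
  shows "(\<exists>k \<in> rename_set \<sigma> K. (\<sigma> x, fst k) \<in> ord Q) \<longleftrightarrow> (\<exists>k \<in> K. (x, fst k) \<in> ord P)"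
proof
  assume "\<exists>k \<in> rename_set \<sigma> K. (\<sigma> x, fst k) \<in> ord Q"
  then obtain w b where wb: "(w, b) \<in> K" and "(\<sigma> x, \<sigma> w) \<in> ord Q"
    unfolding rename_set_def by auto
  moreover have "w \<in> carrier P" using wb K elems_carrier[of w b P] by blast
  ultimately have "(x, w) \<in> ord P" using poset_iso_ord[OF iso x] by blast
  then show "\<exists>k \<in> K. (x, fst k) \<in> ord P" using wb by (intro bexI[of _ "(w, b)"]) simp_all
next
  assume "\<exists>k \<in> K. (x, fst k) \<in> ord P"
  then obtain w b where wb: "(w, b) \<in> K" and "(x, w) \<in> ord P" by auto
  moreover have "w \<in> carrier P" using wb K elems_carrier[of w b P] by blast
  ultimately have "(\<sigma> x, \<sigma> w) \<in> ord Q" using poset_iso_ord[OF iso x] by blast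
  moreover have "(\<sigma> w, b) \<in> rename_set \<sigma> K" using wb unfolding rename_set_def by blast
  ultimately show "\<exists>k \<in> rename_set \<sigma> K. (\<sigma> x, fst k) \<in> ord Q"
    by (intro bexI[of _ "(\<sigma> w, b)"]) simp_all
qed

section \<open>Adding an event to a poset\<close>

lemma carrier_delta: "carrier (delta P K e a) = insert e (carrier P)"
  unfolding delta_def carrier_def by auto

lemma lab_delta: "lab (delta P K e a) = (lab P)(e \<mapsto> a)"
  unfolding delta_def by simp

lemma elems_delta: "e \<notin> carrier P \<Longrightarrow> elems (delta P K e a) = insert (e, a) (elems P)"
  unfolding elems_def lab_delta carrier_def by (auto split: if_splits)

lemma wf_poset_ord_carrier: "wf_poset P \<Longrightarrow> (x, y) \<in> ord P \<Longrightarrow> x \<in> carrier P \<and> y \<in> carrier P"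
  unfolding wf_poset_def by auto

lemma ord_delta:
  assumes wf: "wf_poset P" and e: "e \<notin> carrier P" and K: "K \<subseteq> elems P"
  shows "ord (delta P K e a) = ord P \<union> {(e, e)} \<union> {(x, e) | x. \<exists>k \<in> K. (x, fst k) \<in> ord P}"
proof -
  let ?E = "ord P \<union> {(fst k, e) | k. k \<in> K}"
  let ?below = "{(x, e) | x. \<exists>k \<in> K. (x, fst k) \<in> ord P}"
  have refl: "\<forall>x \<in> carrier P. (x, x) \<in> ord P" and tr: "trans (ord P)"
    using wf unfolding wf_poset_def by auto
  have K_carrier: "fst k \<in> carrier P" if "k \<in> K" for k
    using that K elems_carrier[of "fst k" "snd k" P] by auto
  have "?E\<^sup>+ \<subseteq> (ord P \<union> ?below)\<^sup>+"
    using refl K_carrier by (intro trancl_mono_subset) fastforce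
  also have "\<dots> = ord P \<union> ?below"
    using tr e wf_poset_ord_carrier[OF wf] by (intro trancl_id) (unfold trans_def, blast)
  finally have "?E\<^sup>+ \<subseteq> ord P \<union> ?below" .
  moreover have "ord P \<union> ?below \<subseteq> ?E\<^sup>+"
  proof
    fix p assume "p \<in> ord P \<union> ?below"
    then show "p \<in> ?E\<^sup>+"
    proof
      assume "p \<in> ?below"
      then obtain x k where "p = (x, e)" "k \<in> K" "(x, fst k) \<in> ord P" by blast
      then have "(x, fst k) \<in> ?E\<^sup>+" "(fst k, e) \<in> ?E\<^sup>+" by blast+
      then show "p \<in> ?E\<^sup>+" unfolding \<open>p = (x, e)\<close> by (rule trancl_trans)
    qed (simp add: r_into_trancl')
  qed
  ultimately have closure: "?E\<^sup>+ = ord P \<union> ?below" by (rule subset_antisym)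
  have "ord (delta P K e a) = Id_on (insert e (carrier P)) \<union> ?E\<^sup>+" unfolding delta_def by simp
  then show ?thesis unfolding closure using refl by (auto simp: Id_on_def)
qed

lemma wf_poset_delta:
  assumes wf: "wf_poset P" and e: "e \<notin> carrier P" and K: "K \<subseteq> elems P"
  shows "wf_poset (delta P K e a)"
proof -
  have in_carrier: "ord P \<subseteq> carrier P \<times> carrier P" using wf unfolding wf_poset_def by blast
  have "trans (ord (delta P K e a))"
    using wf in_carrier e unfolding ord_delta[OF assms] wf_poset_def trans_def by blast
  moreover have "antisym (ord (delta P K e a))"
    using wf in_carrier e unfolding ord_delta[OF assms] wf_poset_def antisym_def by blast
  ultimately show ?thesis
    using wf in_carrier unfolding wf_poset_def carrier_delta ord_delta[OF assms] by auto
qed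

lemma poset_iso_delta:
  assumes iso: "poset_iso P Q \<sigma>" and wfP: "wf_poset P" and wfQ: "wf_poset Q"
    and e: "e \<notin> carrier P" and e': "e' \<notin> carrier Q" and K: "K \<subseteq> elems P"
  shows "poset_iso (delta P K e a) (delta Q (rename_set \<sigma> K) e' a) (\<sigma>(e := e'))"
proof -
  let ?\<sigma>' = "\<sigma>(e := e')"
  have bij: "bij_betw \<sigma> (carrier P) (carrier Q)" using iso unfolding poset_iso_def by blast
  have "bij_betw ?\<sigma>' (carrier P) (carrier Q)"
    using bij e by (subst bij_betw_cong[of _ _ \<sigma>]) auto
  then have "bij_betw ?\<sigma>' (insert e (carrier P)) (insert e' (carrier Q))"
    using notIn_Un_bij_betw[of e "carrier P" ?\<sigma>' "carrier Q"] e e' by simp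
  moreover have "\<forall>x \<in> insert e (carrier P). lab (delta Q (rename_set \<sigma> K) e' a) (?\<sigma>' x) = lab (delta P K e a) x"
    using poset_iso_lab[OF iso] poset_iso_carrier[OF iso] e e' by (auto simp: lab_delta)
  moreover have "(?\<sigma>' x, ?\<sigma>' y) \<in> ord (delta Q (rename_set \<sigma> K) e' a) \<longleftrightarrow> (x, y) \<in> ord (delta P K e a)"
    if x: "x \<in> insert e (carrier P)" and y: "y \<in> insert e (carrier P)" for x y
  proof -
    have old: "?\<sigma>' z = \<sigma> z \<and> \<sigma> z \<in> carrier Q \<and> \<sigma> z \<noteq> e' \<and> z \<noteq> e" if "z \<in> carrier P" for z
      using that e e' poset_iso_carrier[OF iso] by auto
    note ord_simps = ord_delta[OF wfP e K] ord_delta[OF wfQ e' rename_set_elems[OF iso K]]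
    show ?thesis
    proof (cases "x = e")
      case True
      then show ?thesis
        using y old wf_poset_ord_carrier[OF wfP] wf_poset_ord_carrier[OF wfQ] e e'
        unfolding ord_simps by auto
    next
      case False
      then have xP: "x \<in> carrier P" using x by blast
      show ?thesis
      proof (cases "y = e")
        case True
        then show ?thesis
          using old[OF xP] below_rename_set[OF iso K xP] wf_poset_ord_carrier[OF wfP] wf_poset_ord_carrier[OF wfQ] e e'
          unfolding ord_simps by auto
      next
        case False
        then have yP: "y \<in> carrier P" using y by blast
        then show ?thesis using old[OF xP] old[OF yP] poset_iso_ord[OF iso xP yP]
          unfolding ord_simps by auto
      qed
    qed
  qed
  ultimately show ?thesis unfolding poset_iso_def carrier_delta by blast
qed

section \<open>Transport of causal steps\<close>

lemma cstep_target: "cstep N P c K e a P' c' \<Longrightarrow> P' = delta P K e a"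
  unfolding cstep_def by blast

lemma cstep_fresh: "cstep N P c K e a P' c' \<Longrightarrow> e \<notin> carrier P"
  unfolding cstep_def by blast

lemma cstep_cause_set: "cstep N P c K e a P' c' \<Longrightarrow> K \<subseteq> elems P"
  unfolding cstep_def maxO_def using pmarking_causes causes_Un by blast

lemma cstep_causes_target:
  assumes "cstep N P c K e a P' c'"
  shows "causes c' \<subseteq> elems P'"
proof -
  obtain t c0 c1 where pm: "pmarking N P (c0 \<union> c1)" and e: "e \<notin> carrier P"
    and P': "P' = delta P K e a" and c': "c' = cause_all (causes c0 \<union> {(e, a)}) (postset N t) \<union> c1"
    using assms unfolding cstep_def by blast
  have "causes c' \<subseteq> causes (c0 \<union> c1) \<union> {(e, a)}"
    unfolding c' causes_Un using causes_cause_all by blast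
  also have "\<dots> \<subseteq> elems P'"
    unfolding P' elems_delta[OF e] using pmarking_causes[OF pm] by blast
  finally show ?thesis .
qed

lemma cstep_rename:
  assumes iso: "poset_iso P Q \<sigma>" and wfQ: "wf_poset Q" and e': "e' \<notin> carrier Q"
    and st: "cstep N P c K e a P' c'"
  shows "cstep N Q (rename c \<sigma>) (rename_set \<sigma> K) e' a (delta Q (rename_set \<sigma> K) e' a)
    (rename c' (\<sigma>(e := e')))"
proof -
  obtain t c0 c1 where t: "t \<in> transs N" and c: "c = c0 \<union> c1" and pm: "pmarking N P (c0 \<union> c1)"
    and pre: "places_of c0 = preset N t" and a: "a = tlab N t" and e: "e \<notin> carrier P"
    and K: "K = maxO P (causes c0)"
    and c': "c' = cause_all (causes c0 \<union> {(e, a)}) (postset N t) \<union> c1"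
    using st unfolding cstep_def by blast
  have c0: "causes c0 \<subseteq> elems P" and c1: "causes c1 \<subseteq> elems P"
    using pmarking_causes[OF pm] unfolding causes_Un by blast+
  have old: "(\<sigma>(e := e')) x = \<sigma> x" if "(x, b) \<in> elems P" for x b
    using that e elems_carrier[of x b P] by auto
  have old0: "rename_set (\<sigma>(e := e')) (causes c0) = rename_set \<sigma> (causes c0)"
    using c0 old by (intro rename_set_cong) blast
  have old1: "rename c1 (\<sigma>(e := e')) = rename c1 \<sigma>"
    using c1 old by (intro rename_cong) blast
  have "rename c' (\<sigma>(e := e'))
      = cause_all (rename_set (\<sigma>(e := e')) (causes c0) \<union> {(e', a)}) (postset N t) \<union> rename c1 (\<sigma>(e := e'))"
    unfolding c' rename_Un rename_cause_all by (simp add: rename_set_eq_image)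
  then have c'_renamed: "rename c' (\<sigma>(e := e'))
      = cause_all (causes (rename c0 \<sigma>) \<union> {(e', a)}) (postset N t) \<union> rename c1 \<sigma>"
    unfolding old0 old1 causes_rename .
  have max: "rename_set \<sigma> K = maxO Q (causes (rename c0 \<sigma>))"
    unfolding K causes_rename by (rule maxO_rename[OF iso c0, symmetric])
  have "pmarking N Q (rename c0 \<sigma> \<union> rename c1 \<sigma>)"
    using pmarking_rename[OF iso wfQ pm] by (simp add: rename_Un)
  then show ?thesis
    unfolding cstep_def c rename_Un
    by (intro exI[of _ t] exI[of _ "rename c0 \<sigma>"] exI[of _ "rename c1 \<sigma>"])
      (simp add: t pre a e' max c'_renamed places_of_rename)
qed

section \<open>Invariance of bisimilarity\<close>

lemma ccbisimilar_pmarking: "ccbisimilar N P c1 c2 \<Longrightarrow> pmarking N P c1 \<and> pmarking N P c2"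
  unfolding ccbisimilar_def ccbisim_def by blast

lemma ccbisimilar_step:
  assumes "ccbisimilar N P c1 c2" and "cstep N P c1 K e a Q c1'"
  obtains c2' where "cstep N P c2 K e a Q c2'" and "ccbisimilar N Q c1' c2'"
proof -
  obtain R where R: "ccbisim N R" and c: "(c1, c2) \<in> R P"
    using assms(1) unfolding ccbisimilar_def by blast
  then obtain c2' where "cstep N P c2 K e a Q c2'" and "(c1', c2') \<in> R Q"
    using assms(2) unfolding ccbisim_def by blast
  with R show thesis using that unfolding ccbisimilar_def by blast
qed

lemma ccbisimilar_sym: "ccbisimilar N P c1 c2 \<Longrightarrow> ccbisimilar N P c2 c1"
proof -
  assume "ccbisimilar N P c1 c2"
  then obtain R where "ccbisim N R" "(c1, c2) \<in> R P" unfolding ccbisimilar_def by blast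
  moreover from \<open>ccbisim N R\<close> have "ccbisim N (\<lambda>P. (R P)\<inverse>)" unfolding ccbisim_def by blast
  ultimately show ?thesis unfolding ccbisimilar_def by blast
qed

definition renamed_ccbisimilar :: "('s, 't, 'a) net \<Rightarrow> ('e, 'a) poset
    \<Rightarrow> (('e, 'a, 's) cmarking \<times> ('e, 'a, 's) cmarking) set" where
  "renamed_ccbisimilar N Q = {(rename c1 \<rho>, rename c2 \<rho>) | c1 c2 \<rho> P.
     wf_poset Q \<and> poset_iso P Q \<rho> \<and> ccbisimilar N P c1 c2}"

lemma renamed_ccbisimilar_sym:
  "(d1, d2) \<in> renamed_ccbisimilar N Q \<Longrightarrow> (d2, d1) \<in> renamed_ccbisimilar N Q"
  unfolding renamed_ccbisimilar_def using ccbisimilar_sym by blast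

lemma renamed_ccbisimilar_pmarking:
  "(d1, d2) \<in> renamed_ccbisimilar N Q \<Longrightarrow> pmarking N Q d1"
  unfolding renamed_ccbisimilar_def using ccbisimilar_pmarking pmarking_rename by blast

lemma renamed_ccbisimilar_step:
  fixes Q0 :: "('e, 'a) poset"
  assumes inf: "infinite (UNIV :: 'e set)"
    and rel: "(d1, d2) \<in> renamed_ccbisimilar N Q0" and st: "cstep N Q0 d1 K e a Q1 d1'"
  shows "\<exists>d2'. cstep N Q0 d2 K e a Q1 d2' \<and> (d1', d2') \<in> renamed_ccbisimilar N Q1"
proof -
  obtain c1 c2 \<rho> P0 where d: "d1 = rename c1 \<rho>" "d2 = rename c2 \<rho>"
    and wfQ0: "wf_poset Q0" and iso: "poset_iso P0 Q0 \<rho>" and bis: "ccbisimilar N P0 c1 c2"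
    using rel unfolding renamed_ccbisimilar_def by blast
  have pm1: "pmarking N P0 c1" using ccbisimilar_pmarking[OF bis] by blast
  then have wfP0: "wf_poset P0" unfolding pmarking_def by blast
  \<comment> \<open>The new event e of the given step may well occur in P0, so the pulled-back step needs a fresh one.\<close>
  then obtain e0 where e0: "e0 \<notin> carrier P0"
    using ex_new_if_finite[OF inf] unfolding wf_poset_def by blast
  have e: "e \<notin> carrier Q0" using cstep_fresh[OF st] .
  have KQ0: "K \<subseteq> elems Q0" using cstep_cause_set[OF st] .
  define \<iota> where "\<iota> = inv_into (carrier P0) \<rho>"
  define \<iota>' where "\<iota>' = \<iota>(e := e0)"
  define \<rho>' where "\<rho>' = \<rho>(e0 := e)"
  define K0 where "K0 = rename_set \<iota> K"
  define P1 where "P1 = delta P0 K0 e0 a"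
  have iso_inv: "poset_iso Q0 P0 \<iota>" unfolding \<iota>_def by (rule poset_iso_inv[OF iso])
  have "rename d1 \<iota> = c1"
    unfolding d \<iota>_def using rename_inv_into_left[OF iso pmarking_causes[OF pm1]] .
  then have st0: "cstep N P0 c1 K0 e0 a P1 (rename d1' \<iota>')"
    using cstep_rename[OF iso_inv wfP0 e0 st] unfolding K0_def P1_def \<iota>'_def by simp
  obtain c2' where st0': "cstep N P0 c2 K0 e0 a P1 c2'" and bis': "ccbisimilar N P1 (rename d1' \<iota>') c2'"
    using ccbisimilar_step[OF bis st0] .
  have K0: "rename_set \<rho> K0 = K"
    unfolding K0_def \<iota>_def using rename_set_inv_into_right[OF iso KQ0] .
  then have "cstep N Q0 d2 K e a Q1 (rename c2' \<rho>')"
    using cstep_rename[OF iso wfQ0 e st0'] cstep_target[OF st] unfolding d \<rho>'_def by simp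
  moreover have "(d1', rename c2' \<rho>') \<in> renamed_ccbisimilar N Q1"
  proof -
    have Q1: "Q1 = delta Q0 K e a" using cstep_target[OF st] .
    have "rename (rename d1' \<iota>') \<rho>' = d1'"
    proof (rule rename_inverse)
      fix x b assume "(x, b) \<in> causes d1'"
      then have "x = e \<or> x \<in> carrier Q0"
        using cstep_causes_target[OF st] elems_carrier[of x b Q1] unfolding Q1 carrier_delta by blast
      then show "\<rho>' (\<iota>' x) = x"
        unfolding \<rho>'_def \<iota>'_def
        using e e0 poset_iso_carrier[OF iso_inv] poset_iso_inv_into_right[OF iso] \<iota>_def by auto
    qed
    moreover have "poset_iso P1 Q1 \<rho>'"
      using poset_iso_delta[OF iso wfP0 wfQ0 e0 e cstep_cause_set[OF st0], of a]
      unfolding P1_def Q1 \<rho>'_def K0 .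
    moreover have "wf_poset Q1" unfolding Q1 using wf_poset_delta[OF wfQ0 e KQ0] .
    ultimately show ?thesis using bis' unfolding renamed_ccbisimilar_def by blast
  qed
  ultimately show ?thesis by blast
qed

lemma ccbisim_renamed_ccbisimilar:
  assumes "infinite (UNIV :: 'e set)"
  shows "ccbisim N (renamed_ccbisimilar N :: ('e, 'a) poset \<Rightarrow> _)"
  unfolding ccbisim_def
  using renamed_ccbisimilar_pmarking renamed_ccbisimilar_sym renamed_ccbisimilar_step[OF assms]
  by meson

theorem lemma6:
  fixes N :: "('s, 't, 'a) net"
    and P Q :: "('e, 'a) poset"
    and \<sigma> :: "'e \<Rightarrow> 'e"
    and c1 c2 :: "('e, 'a, 's) cmarking"
  assumes "infinite (UNIV :: 'e set)"
    and "wf_net N"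
    and "wf_poset P" and "wf_poset Q"
    and "iso P Q \<sigma>"
    and "pmarking N P c1" and "pmarking N P c2"
    and "ccbisimilar N P c1 c2"
  shows "ccbisimilar N Q (rename c1 \<sigma>) (rename c2 \<sigma>)"
proof -
  have "(rename c1 \<sigma>, rename c2 \<sigma>) \<in> renamed_ccbisimilar N Q"
    using assms(4,8) iso_imp_poset_iso[OF assms(5)] unfolding renamed_ccbisimilar_def by blast
  then show ?thesis
    using ccbisim_renamed_ccbisimilar[OF assms(1)] unfolding ccbisimilar_def by blast
qed

end
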